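(* Let $K$ be a field, $D=K[x,y]$, and let $f,g\in D$ be polynomials with zero constant term which are coprime (equivalently, they form a regular sequence in $D_{(x,y)}$). Then for every sufficiently large integer $N$, we have $\frac{x}{(fg)^N}\in R(D)$ and $\frac{y}{(fg)^N}\in R(D)$.
   Context: For an integral domain $D$ with fraction field $F$, the reciprocal complement $R(D)$ is the subring of $F$ generated by all $1/d$, $d\in D\setminus\{0\}$; equivalently the set of all finite sums $\sum_i 1/d_i$ with $d_i\in D\setminus\{0\}$. *)

theory Defs
  imports "HOL-Computational_Algebra.Polynomial_Factorial"
begin

definition reciprocal_complement :: "('a :: idom) fract set" where
  "reciprocal_complement =
     {sum_list (map (\<lambda>d. 1 / to_fract d) ds) | ds. \<forall>d \<in> set ds. d \<noteq> 0}"

text \<open>We model K[x,y] as K[x][y], i.e. the type 'a poly poly (outer variable y).\<close>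
definition var_x :: "('a :: comm_ring_1) poly poly" where
  "var_x = [:[:0, 1:]:]"

definition var_y :: "('a :: comm_ring_1) poly poly" where
  "var_y = [:0, 1:]"

definition const_term :: "('a :: comm_ring_1) poly poly \<Rightarrow> 'a" where
  "const_term f = coeff (coeff f 0) 0"

end

theory Submission
  imports Defs "HOL-Computational_Algebra.Field_as_Ring"
begin

(* Let \<psi> be the substitution x := 0 (resp. y := 0), a ring map from K[x,y] onto a polynomial
   ring in one variable whose kernel is generated by x (resp. y). By a dimension count, \<psi> f and
   \<psi> g are algebraically dependent: P(\<psi> f, \<psi> g) = 0 for some nonzero P, so x (resp. y)
   divides H = P(f, g). Coprime f, g with zero constant term are algebraically independent, hence
   H = x q with q \<noteq> 0. For N beyond the degree of P,
   x / (f g)^N = (1 / q) * \<Sum> P_ij / (f^(N-i) g^(N-j)), and every factor lies in the ring R(D). *)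

lemma zero_in_reciprocal_complement: "0 \<in> reciprocal_complement"
  unfolding reciprocal_complement_def by (auto intro!: exI[of _ "[]"])

lemma reciprocal_add_in_reciprocal_complement:
  assumes "d \<noteq> 0" and "b \<in> reciprocal_complement"
  shows "1 / to_fract d + b \<in> reciprocal_complement"
proof -
  from assms(2) obtain ds where "b = sum_list (map (\<lambda>d. 1 / to_fract d) ds)" "\<forall>d\<in>set ds. d \<noteq> 0"
    unfolding reciprocal_complement_def by blast
  with assms(1) show ?thesis
    unfolding reciprocal_complement_def by (auto intro!: exI[of _ "d # ds"])
qed

lemma reciprocal_in_reciprocal_complement:
  "d \<noteq> 0 \<Longrightarrow> 1 / to_fract d \<in> reciprocal_complement"
  using reciprocal_add_in_reciprocal_complement[OF _ zero_in_reciprocal_complement] by simp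

lemma reciprocal_complement_induct [consumes 1, case_names zero reciprocal_add]:
  assumes "a \<in> reciprocal_complement"
    and "P 0"
    and "\<And>d b. d \<noteq> 0 \<Longrightarrow> b \<in> reciprocal_complement \<Longrightarrow> P b \<Longrightarrow> P (1 / to_fract d + b)"
  shows "P a"
proof -
  from assms(1) obtain ds where a: "a = sum_list (map (\<lambda>d. 1 / to_fract d) ds)"
    and nonzero: "\<forall>d\<in>set ds. d \<noteq> 0"
    unfolding reciprocal_complement_def by blast
  have "P (sum_list (map (\<lambda>d. 1 / to_fract d) ds))
      \<and> sum_list (map (\<lambda>d. 1 / to_fract d) ds) \<in> reciprocal_complement"
    using nonzero
    by (induction ds)
      (auto intro: assms(2,3) zero_in_reciprocal_complement reciprocal_add_in_reciprocal_complement)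
  with a show ?thesis by simp
qed

lemma reciprocal_complement_add:
  assumes "a \<in> reciprocal_complement" and "b \<in> reciprocal_complement"
  shows "a + b \<in> reciprocal_complement"
  using assms(1)
proof (induction rule: reciprocal_complement_induct)
  case zero
  with assms(2) show ?case by simp
next
  case (reciprocal_add d a)
  then show ?case by (simp add: add.assoc reciprocal_add_in_reciprocal_complement)
qed

lemma reciprocal_mult_in_reciprocal_complement:
  assumes "d \<noteq> 0" and "b \<in> reciprocal_complement"
  shows "1 / to_fract d * b \<in> reciprocal_complement"
  using assms(2)
proof (induction rule: reciprocal_complement_induct)
  case zero
  then show ?case by (simp add: zero_in_reciprocal_complement)
next
  case (reciprocal_add e b)
  have "1 / to_fract d * (1 / to_fract e + b) = 1 / to_fract (d * e) + 1 / to_fract d * b"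
    by (simp add: distrib_left)
  with assms(1) reciprocal_add show ?case
    by (simp only:) (intro reciprocal_add_in_reciprocal_complement; simp)
qed

lemma reciprocal_complement_mult:
  assumes "a \<in> reciprocal_complement" and "b \<in> reciprocal_complement"
  shows "a * b \<in> reciprocal_complement"
  using assms(1)
proof (induction rule: reciprocal_complement_induct)
  case zero
  then show ?case by (simp add: zero_in_reciprocal_complement)
next
  case (reciprocal_add d a)
  have "(1 / to_fract d + a) * b = 1 / to_fract d * b + a * b"
    by (rule distrib_right)
  with reciprocal_add assms(2) show ?case
    by (simp only:) (intro reciprocal_complement_add reciprocal_mult_in_reciprocal_complement)
qed

lemma reciprocal_complement_sum:
  "(\<And>x. x \<in> A \<Longrightarrow> F x \<in> reciprocal_complement) \<Longrightarrow> sum F A \<in> reciprocal_complement"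
  by (induction A rule: infinite_finite_induct)
    (auto intro: zero_in_reciprocal_complement reciprocal_complement_add)

lemma unit_in_reciprocal_complement:
  assumes "is_unit u"
  shows "to_fract u \<in> reciprocal_complement"
proof -
  from assms obtain v where "1 = u * v" by (rule dvdE)
  then have "to_fract u = 1 / to_fract v" and "v \<noteq> 0"
    by (auto simp: eq_divide_eq simp flip: to_fract_mult)
  then show ?thesis by (simp add: reciprocal_in_reciprocal_complement)
qed

lemma const_poly_poly_in_reciprocal_complement:
  "to_fract [:[:c :: 'a :: field:]:] \<in> reciprocal_complement"
proof (cases "c = 0")
  case False
  then have "is_unit [:[:c:]:]"
    by (simp add: is_unit_const_poly_iff dvd_field_iff)
  then show ?thesis by (rule unit_in_reciprocal_complement)
qed (simp add: zero_in_reciprocal_complement)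

lemma const_term_eq_poly: "const_term f = poly (poly f 0) 0"
  by (simp add: const_term_def poly_0_coeff_0)

lemma const_term_add [simp]: "const_term (f + g) = const_term f + const_term g"
  and const_term_mult [simp]: "const_term (f * g) = const_term f * const_term g"
  and const_term_const [simp]: "const_term [:[:c:]:] = c"
  and const_term_1 [simp]: "const_term 1 = 1"
  by (simp_all add: const_term_eq_poly)

lemma const_term_zero_dvd:
  "f dvd h \<Longrightarrow> const_term f = 0 \<Longrightarrow> const_term h = 0"
  by (elim dvdE) simp

lemma const_term_zero_imp_not_unit:
  assumes "const_term f = 0"
  shows "\<not> is_unit f"
proof
  assume "is_unit f"
  then obtain u where "1 = f * u" by (rule dvdE)
  then have "const_term f * const_term u = 1"
    by (metis const_term_mult const_term_1)
  with assms show False by simp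
qed

lemma coprime_const_term_zero_imp_nonzero:
  fixes f g :: "'a :: idom_divide poly poly"
  assumes "coprime f g" and "const_term g = 0"
  shows "f \<noteq> 0"
  using assms const_term_zero_imp_not_unit[of g] by auto

lemma map_poly_add_hom:
  assumes "h 0 = 0" and "\<And>a b. h (a + b) = h a + h b"
  shows "map_poly h (p + q) = map_poly h p + map_poly h q"
  by (rule poly_eqI) (simp add: coeff_map_poly assms)

lemma map_poly_mult_hom:
  assumes "h 0 = 0" and "\<And>a b. h (a + b) = h a + h b" and "\<And>a b. h (a * b) = h a * h b"
  shows "map_poly h (p * q) = map_poly h p * map_poly h q"
proof (rule poly_eqI)
  fix n
  have "h (\<Sum>i\<le>n. coeff p i * coeff q (n - i)) = (\<Sum>i\<le>n. h (coeff p i) * h (coeff q (n - i)))"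
    using sum_comp_morphism[of h "\<lambda>i. coeff p i * coeff q (n - i)" "{..n}", OF assms(1,2)]
    by (simp add: assms(3) o_def)
  then show "coeff (map_poly h (p * q)) n = coeff (map_poly h p * map_poly h q) n"
    by (simp add: coeff_map_poly coeff_mult assms(1))
qed

lemma bij_map_poly:
  assumes "bij h" and "h 0 = 0"
  shows "bij (map_poly h)"
proof (rule o_bij)
  have "inv h 0 = 0" using assms by (metis bij_is_inj inv_f_f)
  with assms show "map_poly h \<circ> map_poly (inv h) = id" and "map_poly (inv h) \<circ> map_poly h = id"
    by (auto simp: fun_eq_iff map_poly_map_poly o_def bij_is_inj bij_is_surj surj_f_inv_f)
qed

lemma bij_mult_dvd_iff:
  fixes \<Phi> :: "'a :: comm_semiring_1 \<Rightarrow> 'b :: comm_semiring_1"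
  assumes "bij \<Phi>" and "\<And>a b. \<Phi> (a * b) = \<Phi> a * \<Phi> b"
  shows "\<Phi> a dvd \<Phi> b \<longleftrightarrow> a dvd b"
proof
  assume "\<Phi> a dvd \<Phi> b"
  then obtain k where "\<Phi> b = \<Phi> a * k" by (rule dvdE)
  moreover obtain k' where "k = \<Phi> k'" using bij_is_surj[OF assms(1)] by (metis surjD)
  ultimately have "\<Phi> b = \<Phi> (a * k')" by (simp add: assms(2))
  then have "b = a * k'" by (rule injD[OF bij_is_inj[OF assms(1)]])
  then show "a dvd b" by simp
qed (auto simp: assms(2) elim!: dvdE)

lemma bij_mult_coprime_iff:
  fixes \<Phi> :: "'a :: algebraic_semidom \<Rightarrow> 'b :: algebraic_semidom"
  assumes "bij \<Phi>" and "\<And>a b. \<Phi> (a * b) = \<Phi> a * \<Phi> b"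
  shows "coprime (\<Phi> a) (\<Phi> b) \<longleftrightarrow> coprime a b"
proof -
  have "\<Phi> 1 * y = y" for y
    using bij_is_surj[OF assms(1)] by (metis assms(2) mult_1 surjD)
  then have "\<Phi> 1 = 1" by (metis mult_1_right)
  then have "is_unit (\<Phi> c) \<longleftrightarrow> is_unit c" for c
    using bij_mult_dvd_iff[OF assms, of c 1] by simp
  moreover have "(\<forall>c. P c) \<longleftrightarrow> (\<forall>c. P (\<Phi> c))" for P
    using bij_is_surj[OF assms(1)] by (metis surjD)
  ultimately show ?thesis
    unfolding coprime_def by (simp add: bij_mult_dvd_iff[OF assms])
qed

(* The library's gcd structure on 'k poly poly needs a coefficient class such as field_gcd.
   This copy of an arbitrary field carries the trivial instance (as Field_as_Ring provides for
   rat, real and complex); cancellation by a coprime factor is then transported back along the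
   coefficientwise isomorphism. *)
typedef 'a gcd_field = "UNIV :: 'a set" by simp

lemmas gcd_field_simps =
  Abs_gcd_field_inverse[OF UNIV_I] Rep_gcd_field_inverse Rep_gcd_field_inject[symmetric]

instantiation gcd_field :: (field) field
begin
definition "0 = Abs_gcd_field 0"
definition "1 = Abs_gcd_field 1"
definition "a + b = Abs_gcd_field (Rep_gcd_field a + Rep_gcd_field b)"
definition "a - b = Abs_gcd_field (Rep_gcd_field a - Rep_gcd_field b)"
definition "- a = Abs_gcd_field (- Rep_gcd_field a)"
definition "a * b = Abs_gcd_field (Rep_gcd_field a * Rep_gcd_field b)"
definition "inverse a = Abs_gcd_field (inverse (Rep_gcd_field a))"
definition "a div b = Abs_gcd_field (Rep_gcd_field a / Rep_gcd_field b)"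
instance
  by standard (simp_all add: zero_gcd_field_def one_gcd_field_def plus_gcd_field_def
      minus_gcd_field_def uminus_gcd_field_def times_gcd_field_def inverse_gcd_field_def
      divide_gcd_field_def gcd_field_simps algebra_simps divide_inverse)
end

instantiation gcd_field :: (field)
  "{unique_euclidean_ring, normalization_euclidean_semiring, normalization_semidom_multiplicative}"
begin
definition [simp]: "normalize_gcd_field = (normalize_field :: 'a gcd_field \<Rightarrow> _)"
definition [simp]: "unit_factor_gcd_field = (unit_factor_field :: 'a gcd_field \<Rightarrow> _)"
definition [simp]: "modulo_gcd_field = (mod_field :: 'a gcd_field \<Rightarrow> _)"
definition [simp]: "euclidean_size_gcd_field = (euclidean_size_field :: 'a gcd_field \<Rightarrow> _)"
definition [simp]: "division_segment (x :: 'a gcd_field) = 1"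
instance
  by standard (simp_all add: dvd_field_iff field_split_simps split: if_splits)
end

instantiation gcd_field :: (field) euclidean_ring_gcd
begin
definition "gcd_gcd_field = (Euclidean_Algorithm.gcd :: 'a gcd_field \<Rightarrow> _)"
definition "lcm_gcd_field = (Euclidean_Algorithm.lcm :: 'a gcd_field \<Rightarrow> _)"
definition "Gcd_gcd_field = (Euclidean_Algorithm.Gcd :: 'a gcd_field set \<Rightarrow> _)"
definition "Lcm_gcd_field = (Euclidean_Algorithm.Lcm :: 'a gcd_field set \<Rightarrow> _)"
instance
  by standard (simp_all add: gcd_gcd_field_def lcm_gcd_field_def Gcd_gcd_field_def Lcm_gcd_field_def)
end

instance gcd_field :: (field) field_gcd ..

lemma bij_Abs_gcd_field: "bij Abs_gcd_field"
  by (metis bij_betw_def inj_def surj_def gcd_field_simps)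

lemma Abs_gcd_field_0: "Abs_gcd_field 0 = 0"
  and Abs_gcd_field_add: "Abs_gcd_field (a + b) = Abs_gcd_field a + Abs_gcd_field b"
  and Abs_gcd_field_mult: "Abs_gcd_field (a * b) = Abs_gcd_field a * Abs_gcd_field b"
  by (simp_all add: zero_gcd_field_def plus_gcd_field_def times_gcd_field_def gcd_field_simps)

lemma coprime_dvd_mult_right_iff_poly_poly:
  fixes f g h :: "'k :: field poly poly"
  assumes "coprime f g"
  shows "f dvd g * h \<longleftrightarrow> f dvd h"
proof -
  let ?\<Phi> = "map_poly (map_poly Abs_gcd_field)"
  have hom_inner: "map_poly Abs_gcd_field 0 = 0"
    "\<And>a b. map_poly Abs_gcd_field (a + b) = map_poly Abs_gcd_field a + map_poly Abs_gcd_field b"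
    "\<And>a b. map_poly Abs_gcd_field (a * b) = map_poly Abs_gcd_field a * map_poly Abs_gcd_field b"
    by (simp_all add: map_poly_add_hom map_poly_mult_hom Abs_gcd_field_0 Abs_gcd_field_add Abs_gcd_field_mult)
  have mult: "?\<Phi> (a * b) = ?\<Phi> a * ?\<Phi> b" for a b
    by (rule map_poly_mult_hom[OF hom_inner])
  have bij: "bij ?\<Phi>"
    by (intro bij_map_poly bij_Abs_gcd_field) (simp_all add: Abs_gcd_field_0)
  have "coprime (?\<Phi> f) (?\<Phi> g)"
    using assms bij_mult_coprime_iff[OF bij mult, of f g] by blast
  then have "?\<Phi> f dvd ?\<Phi> g * ?\<Phi> h \<longleftrightarrow> ?\<Phi> f dvd ?\<Phi> h"
    by (rule coprime_dvd_mult_right_iff)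
  then show ?thesis
    by (simp flip: mult add: bij_mult_dvd_iff[OF bij mult])
qed

lemma coprime_dvd_poly_in_imp_coeffs_zero:
  fixes f g :: "'k :: field poly poly"
  assumes "coprime f g" and "const_term f = 0" and "const_term g = 0"
  shows "f dvd (\<Sum>j<n. [:[:c j:]:] * g ^ j) \<Longrightarrow> \<forall>j<n. c j = 0"
proof (induction n arbitrary: c)
  case (Suc n)
  let ?rest = "\<Sum>j<n. [:[:c (Suc j):]:] * g ^ j"
  have split: "(\<Sum>j<Suc n. [:[:c j:]:] * g ^ j) = [:[:c 0:]:] + g * ?rest"
    by (simp add: sum.lessThan_Suc_shift sum_distrib_left algebra_simps del: sum.lessThan_Suc)
  have "const_term (\<Sum>j<Suc n. [:[:c j:]:] * g ^ j) = 0"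
    using Suc.prems assms(2) by (rule const_term_zero_dvd)
  then have "c 0 = 0"
    unfolding split using assms(3) by simp
  with Suc.prems have "f dvd g * ?rest"
    unfolding split by simp
  then have "f dvd ?rest"
    by (simp only: coprime_dvd_mult_right_iff_poly_poly[OF assms(1)])
  then have "\<forall>j<n. c (Suc j) = 0"
    by (rule Suc.IH)
  with \<open>c 0 = 0\<close> show ?case
    by (auto simp: less_Suc_eq_0_disj)
qed simp

lemma coprime_algebraically_independent:
  fixes f g :: "'k :: field poly poly"
  assumes "coprime f g" and "const_term f = 0" and "const_term g = 0"
  shows "(\<Sum>i<n. \<Sum>j<m. [:[:c i j:]:] * f ^ i * g ^ j) = 0 \<Longrightarrow> \<forall>i<n. \<forall>j<m. c i j = 0"
proof (induction n arbitrary: c)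
  case (Suc n)
  let ?low = "\<Sum>j<m. [:[:c 0 j:]:] * g ^ j"
  let ?rest = "\<Sum>i<n. \<Sum>j<m. [:[:c (Suc i) j:]:] * f ^ i * g ^ j"
  have "(\<Sum>i<Suc n. \<Sum>j<m. [:[:c i j:]:] * f ^ i * g ^ j) = ?low + f * ?rest"
    by (simp add: sum.lessThan_Suc_shift sum_distrib_left algebra_simps del: sum.lessThan_Suc)
  with Suc.prems have split_eq: "?low + f * ?rest = 0"
    by (simp only:)
  then have "?low = - (f * ?rest)"
    by (simp only: eq_neg_iff_add_eq_0)
  then have "f dvd ?low"
    by (simp only: dvd_minus_iff dvd_triv_left)
  then have "\<forall>j<m. c 0 j = 0"
    by (rule coprime_dvd_poly_in_imp_coeffs_zero[OF assms])
  then have "?low = 0"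
    by simp
  with split_eq have "f * ?rest = 0"
    by (simp only: add_0_left)
  moreover have "f \<noteq> 0"
    using assms(1,3) by (rule coprime_const_term_zero_imp_nonzero)
  ultimately have "\<forall>i<n. \<forall>j<m. c (Suc i) j = 0"
    by (intro Suc.IH) simp
  with \<open>\<forall>j<m. c 0 j = 0\<close> show ?case
    by (auto simp: less_Suc_eq_0_disj)
qed simp

lemma (in vector_space) dependent_family_if_card_gt:
  assumes "finite I" and "finite T" and "card T < card I" and "w ` I \<subseteq> span T"
  shows "\<exists>c. (\<exists>i\<in>I. c i \<noteq> 0) \<and> (\<Sum>i\<in>I. c i *s w i) = 0"
proof (cases "inj_on w I")
  case True
  have "dependent (w ` I)"
  proof (rule ccontr)
    assume "independent (w ` I)"
    then have "card (w ` I) \<le> card T"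
      using independent_span_bound[OF assms(2) _ assms(4)] by simp
    with assms(3) card_image[OF True] show False by simp
  qed
  then obtain u where "\<exists>v\<in>w ` I. u v \<noteq> 0" and "(\<Sum>v\<in>w ` I. u v *s v) = 0"
    using dependent_finite[OF finite_imageI[OF assms(1)]] by blast
  with True show ?thesis
    by (intro exI[of _ "u \<circ> w"]) (simp add: sum.reindex)
next
  case False
  then obtain i j where ij: "i \<in> I" "j \<in> I" "i \<noteq> j" "w i = w j"
    unfolding inj_on_def by blast
  define c :: "_ \<Rightarrow> 'a" where "c k = (if k = i then 1 else if k = j then -1 else 0)" for k
  have "(\<Sum>k\<in>I. c k *s w k) = (\<Sum>k\<in>{i, j}. c k *s w k)"
    using assms(1) ij(1,2) by (intro sum.mono_neutral_right) (auto simp: c_def)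
  also have "\<dots> = 0"
    using ij(3,4) by (simp add: c_def)
  finally show ?thesis
    using ij(1) by (intro exI[of _ c]) (auto simp: c_def)
qed

lemma poly_powers_dependent:
  fixes \<phi> \<gamma> :: "'k :: field poly"
  obtains m c where "\<exists>i<m. \<exists>j<m. c i j \<noteq> 0"
    and "(\<Sum>i<m. \<Sum>j<m. smult (c i j) (\<phi> ^ i * \<gamma> ^ j)) = 0"
proof -
  interpret vector_space "smult :: 'k \<Rightarrow> 'k poly \<Rightarrow> 'k poly"
    by unfold_locales (simp_all add: smult_add_right smult_add_left)
  (* The m^2 products \<phi>^i \<gamma>^j with i, j < m all have degree at most L < m^2 - 1. *)
  define d where "d = max (degree \<phi>) (degree \<gamma>)"
  define m where "m = 2 * d + 2"
  define L where "L = 2 * d * m"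
  define I where "I = {..<m} \<times> {..<m}"
  define w where "w = (\<lambda>(i, j). \<phi> ^ i * \<gamma> ^ j)"
  define T where "T = (\<lambda>k. monom (1 :: 'k) k) ` {..L}"
  have "w x \<in> span T" if "x \<in> I" for x
  proof -
    obtain i j where x: "x = (i, j)" "i < m" "j < m"
      using \<open>x \<in> I\<close> unfolding I_def by blast
    have "degree (w x) \<le> degree (\<phi> ^ i) + degree (\<gamma> ^ j)"
      unfolding x w_def by (simp add: degree_mult_le)
    also have "\<dots> \<le> degree \<phi> * i + degree \<gamma> * j"
      by (intro add_mono degree_power_le)
    also have "\<dots> \<le> d * m + d * m"
      using x unfolding d_def by (intro add_mono mult_mono) auto
    finally have "degree (w x) \<le> L"
      unfolding L_def by simp
    then have "w x = (\<Sum>k\<le>L. smult (coeff (w x) k) (monom 1 k))"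
      by (subst poly_as_sum_of_monoms'[symmetric]) (simp_all add: smult_monom)
    also have "\<dots> \<in> span T"
      unfolding T_def by (intro span_sum span_scale span_base) simp
    finally show ?thesis .
  qed
  moreover have "card T < card I"
  proof -
    have "card T \<le> L + 1"
      unfolding T_def using card_image_le[of "{..L}"] by simp
    also have "\<dots> < m * m"
      unfolding L_def m_def by (simp add: algebra_simps)
    finally show ?thesis
      unfolding I_def by (simp add: card_cartesian_product)
  qed
  ultimately obtain c where "\<exists>x\<in>I. c x \<noteq> 0" and "(\<Sum>x\<in>I. smult (c x) (w x)) = 0"
    using dependent_family_if_card_gt[of I T w] unfolding I_def T_def by blast
  then show ?thesis
    by (intro that[of m "\<lambda>i j. c (i, j)"])
      (auto simp: I_def w_def sum.cartesian_product case_prod_beta)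
qed

lemma to_fract_power [simp]: "to_fract (x ^ n) = to_fract x ^ n"
  by (induction n) simp_all

lemma quotient_by_power_in_reciprocal_complement:
  fixes f g z q :: "'a :: idom"
  assumes relation: "z * q = (\<Sum>i<m. \<Sum>j<m. a i j * f ^ i * g ^ j)"
    and "q \<noteq> 0" and "f \<noteq> 0" and "g \<noteq> 0"
    and coeffs: "\<And>i j. to_fract (a i j) \<in> reciprocal_complement"
    and "m \<le> N"
  shows "to_fract z / to_fract ((f * g) ^ N) \<in> reciprocal_complement"
proof -
  have monomial: "to_fract (a i j * f ^ i * g ^ j) / to_fract ((f * g) ^ N)
      = to_fract (a i j) * (1 / to_fract (f ^ (N - i) * g ^ (N - j)))"
    if "i < m" and "j < m" for i j
  proof -
    have "f ^ N = f ^ (N - i) * f ^ i" and "g ^ N = g ^ (N - j) * g ^ j"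
      using that \<open>m \<le> N\<close> by (simp_all flip: power_add)
    with \<open>f \<noteq> 0\<close> \<open>g \<noteq> 0\<close> show ?thesis
      by (simp add: power_mult_distrib field_simps)
  qed
  have "to_fract z / to_fract ((f * g) ^ N) = 1 / to_fract q * (to_fract (z * q) / to_fract ((f * g) ^ N))"
    using \<open>q \<noteq> 0\<close> by simp
  also have "\<dots> = 1 / to_fract q *
      (\<Sum>i<m. \<Sum>j<m. to_fract (a i j) * (1 / to_fract (f ^ (N - i) * g ^ (N - j))))"
    unfolding relation to_fract_sum sum_divide_distrib
    by (intro arg_cong[where f = "(*) (1 / to_fract q)"] sum.cong refl monomial) simp_all
  finally show ?thesis
    using assms(2-4)
    by (simp only:) (intro reciprocal_complement_mult reciprocal_complement_sum coeffs
        reciprocal_in_reciprocal_complement; simp)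
qed

lemma eventually_quotient_by_power_in_reciprocal_complement:
  fixes f g z :: "'k :: field poly poly" and \<psi> :: "'k poly poly \<Rightarrow> 'k poly"
  assumes "coprime f g" and "const_term f = 0" and "const_term g = 0"
    and \<psi>_add: "\<And>a b. \<psi> (a + b) = \<psi> a + \<psi> b"
    and \<psi>_mult: "\<And>a b. \<psi> (a * b) = \<psi> a * \<psi> b"
    and \<psi>_const: "\<And>c. \<psi> [:[:c:]:] = [:c:]"
    and kernel: "\<And>h. \<psi> h = 0 \<Longrightarrow> z dvd h"
  shows "eventually (\<lambda>N. to_fract z / to_fract ((f * g) ^ N) \<in> reciprocal_complement) sequentially"
proof -
  have \<psi>_0: "\<psi> 0 = 0" and \<psi>_1: "\<psi> 1 = 1"
    using \<psi>_const[of 0] \<psi>_const[of 1] by (simp_all add: one_pCons)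
  have \<psi>_power: "\<psi> (a ^ n) = \<psi> a ^ n" for a n
    by (induction n) (simp_all add: \<psi>_1 \<psi>_mult)
  have \<psi>_sum: "\<psi> (sum h A) = (\<Sum>x\<in>A. \<psi> (h x))" for h and A :: "'b set"
    using sum_comp_morphism[of \<psi> h A, OF \<psi>_0 \<psi>_add] by (simp add: o_def)
  obtain m c where nontrivial: "\<exists>i<m. \<exists>j<m. c i j \<noteq> 0"
    and relation: "(\<Sum>i<m. \<Sum>j<m. smult (c i j) (\<psi> f ^ i * \<psi> g ^ j)) = 0"
    by (rule poly_powers_dependent)
  define H where "H = (\<Sum>i<m. \<Sum>j<m. [:[:c i j:]:] * f ^ i * g ^ j)"
  have "\<psi> H = (\<Sum>i<m. \<Sum>j<m. smult (c i j) (\<psi> f ^ i * \<psi> g ^ j))"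
    unfolding H_def \<psi>_sum \<psi>_mult \<psi>_power \<psi>_const by (simp add: mult.assoc)
  then obtain q where "z * q = H"
    using relation kernel by (metis dvdE)
  moreover have "H \<noteq> 0"
    using coprime_algebraically_independent[OF assms(1-3)] nontrivial unfolding H_def by blast
  ultimately have "q \<noteq> 0"
    by auto
  have "f \<noteq> 0" and "g \<noteq> 0"
    using assms(1-3) coprime_const_term_zero_imp_nonzero coprime_commute by blast+
  show ?thesis
  proof (rule eventually_sequentiallyI)
    fix N assume "m \<le> N"
    with \<open>z * q = H\<close> \<open>q \<noteq> 0\<close> \<open>f \<noteq> 0\<close> \<open>g \<noteq> 0\<close> show "to_fract z / to_fract ((f * g) ^ N) \<in> reciprocal_complement"
      unfolding H_def
      by (intro quotient_by_power_in_reciprocal_complement[where a = "\<lambda>i j. [:[:c i j:]:]"]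
          const_poly_poly_in_reciprocal_complement)
  qed
qed

lemma var_x_dvdI:
  fixes h :: "'a :: idom_divide poly poly"
  assumes "map_poly (\<lambda>c. poly c 0) h = 0"
  shows "var_x dvd h"
proof -
  have "coeff h k = [:0, 1:] * (coeff h k div [:0, 1:])" for k
  proof -
    have "poly (coeff h k) 0 = 0"
      using arg_cong[OF assms, of "\<lambda>p. coeff p k"] by (simp add: coeff_map_poly)
    then have "[:0, 1:] dvd coeff h k"
      by (simp add: poly_eq_0_iff_dvd)
    then show ?thesis
      by (rule dvd_mult_div_cancel[symmetric])
  qed
  then have "h = var_x * map_poly (\<lambda>c. c div [:0, 1:]) h"
    unfolding var_x_def by (intro poly_eqI) (simp add: coeff_map_poly)
  then show ?thesis
    by (rule dvdI)
qed

lemma var_y_dvdI: "poly h 0 = 0 \<Longrightarrow> var_y dvd h"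
  by (simp add: var_y_def poly_eq_0_iff_dvd)

theorem mainTheorem4:
  fixes f g :: "('k :: field) poly poly"
  assumes "const_term f = 0" and "const_term g = 0"
    and "coprime f g"
  shows "\<exists>N0::nat. \<forall>N\<ge>N0.
           to_fract var_x / to_fract ((f * g) ^ N) \<in> reciprocal_complement \<and>
           to_fract var_y / to_fract ((f * g) ^ N) \<in> reciprocal_complement"
proof -
  let ?eval_x = "map_poly (\<lambda>c. poly c 0) :: 'k poly poly \<Rightarrow> 'k poly"
  have "eventually (\<lambda>N. to_fract var_x / to_fract ((f * g) ^ N) \<in> reciprocal_complement) sequentially"
    using assms(3,1,2)
    by (rule eventually_quotient_by_power_in_reciprocal_complement[where \<psi> = ?eval_x])
      (simp_all add: map_poly_add_hom map_poly_mult_hom map_poly_pCons var_x_dvdI)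
  moreover have "eventually (\<lambda>N. to_fract var_y / to_fract ((f * g) ^ N) \<in> reciprocal_complement) sequentially"
    using assms(3,1,2)
    by (rule eventually_quotient_by_power_in_reciprocal_complement[where \<psi> = "\<lambda>h. poly h 0"])
      (simp_all add: var_y_dvdI)
  ultimately show ?thesis
    unfolding eventually_sequentially[symmetric] by (rule eventually_conj)
qed

end
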